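(* Let $K$ be a field, $A=K[x_1,\dots,x_n]$, and $P=(x_1^{e_1},\dots,x_r^{e_r})$ for some $r\le n$ and integers $2\le e_1\le\cdots\le e_r$. Let $J\subset A$ be a strongly stable ideal and $I\subset A$ a monomial ideal containing $P+J$. Fix variables $a=x_i$, $b=x_j$ with $i<j$ and an integer $t>0$. Then $J\subset \mathrm{Shift}_{a,b,t}(I)$.
   Context: A monomial ideal $J$ is strongly stable if whenever $x_k m\in J$ for a monomial $m$, then $x_l m\in J$ for all $l<k$. For a monomial ideal $I$, variables $a=x_i,b=x_j$ with $i<j$, and $t\in\mathbb{Z}_{\ge0}$, $\mathrm{Shift}_{a,b,t}(I)$ is the $K$-vector space spanned by the following monomials, where $f$ ranges over monomials divisible by neither $a$ nor $b$ and $s,l$ range over integers with $0\le s<l$: (1) $fa^sb^r$ whenever $fa^sb^r\in I$ and $r<t$; (2) $fa^sb^{s+t}$ whenever $fa^sb^{s+t}\in I$; (3) $fa^lb^{s+t}$ whenever $fa^lb^{s+t}\in I$ or $fa^sb^{l+t}\in I$; (4) $fa^sb^{l+t}$ whenever both $fa^lb^{s+t}\in I$ and $fa^sb^{l+t}\in I$. *)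

theory Defs
  imports Main "HOL-Library.Function_Algebras"
begin

text \<open>Monomials of A = K[x_0,...,x_(n-1)] are exponent vectors nat => nat vanishing
  outside {0..<n}; the product of monomials is pointwise addition. A monomial ideal is
  identified with the set of monomials it contains (it is the K-span of them); the field K
  plays no role in the statement.\<close>

definition monomial :: "nat \<Rightarrow> (nat \<Rightarrow> nat) \<Rightarrow> bool" where
  "monomial n m \<longleftrightarrow> (\<forall>k\<ge>n. m k = 0)"

definition xpow :: "nat \<Rightarrow> nat \<Rightarrow> (nat \<Rightarrow> nat)" where
  "xpow k e = (\<lambda>v. if v = k then e else 0)"

definition monomial_ideal :: "nat \<Rightarrow> (nat \<Rightarrow> nat) set \<Rightarrow> bool" where
  "monomial_ideal n I \<longleftrightarrow> (\<forall>m\<in>I. monomial n m) \<and>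
     (\<forall>m\<in>I. \<forall>g. monomial n g \<longrightarrow> m + g \<in> I)"

definition strongly_stable :: "nat \<Rightarrow> (nat \<Rightarrow> nat) set \<Rightarrow> bool" where
  "strongly_stable n J \<longleftrightarrow> monomial_ideal n J \<and>
     (\<forall>m k l. monomial n m \<longrightarrow> k < n \<longrightarrow> l < k \<longrightarrow> m + xpow k 1 \<in> J \<longrightarrow> m + xpow l 1 \<in> J)"

definition pure_powers_ideal :: "nat \<Rightarrow> nat \<Rightarrow> (nat \<Rightarrow> nat) \<Rightarrow> (nat \<Rightarrow> nat) set" where
  "pure_powers_ideal n r e = {m. monomial n m \<and> (\<exists>k<r. e k \<le> m k)}"

text \<open>The monomials spanning Shift_{a,b,t}(I), with a = x_i, b = x_j.\<close>
definition shift :: "nat \<Rightarrow> (nat \<Rightarrow> nat) set \<Rightarrow> nat \<Rightarrow> nat \<Rightarrow> nat \<Rightarrow> (nat \<Rightarrow> nat) set" where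
  "shift n I i j t =
     {u. \<exists>f s r. monomial n f \<and> f i = 0 \<and> f j = 0 \<and>
          u = f + xpow i s + xpow j r \<and> u \<in> I \<and> r < t}
   \<union> {u. \<exists>f s. monomial n f \<and> f i = 0 \<and> f j = 0 \<and>
          u = f + xpow i s + xpow j (s + t) \<and> u \<in> I}
   \<union> {u. \<exists>f s l. monomial n f \<and> f i = 0 \<and> f j = 0 \<and> s < l \<and>
          u = f + xpow i l + xpow j (s + t) \<and>
          (f + xpow i l + xpow j (s + t) \<in> I \<or> f + xpow i s + xpow j (l + t) \<in> I)}
   \<union> {u. \<exists>f s l. monomial n f \<and> f i = 0 \<and> f j = 0 \<and> s < l \<and>
          u = f + xpow i s + xpow j (l + t) \<and>
          f + xpow i l + xpow j (s + t) \<in> I \<and> f + xpow i s + xpow j (l + t) \<in> I}"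

end

theory Submission
  imports Defs
begin

text \<open>Write a monomial u of J as f a^p b^q with f free of a and b. If q < t or q = p + t,
  u is a spanning monomial of the first two kinds, and if t \<le> q < p + t it is one of
  the third kind with exponents (s, l) = (q - t, p). In the remaining case q = l + t with
  l > p, strong stability of J moves the surplus l - p of b-degree to a, so
  f a^l b^(p+t) lies in J \<subseteq> I as well and u is of the fourth kind.\<close>

lemma monomial_xpow: "k < n \<Longrightarrow> monomial n (xpow k e)"
  by (auto simp: monomial_def xpow_def)

lemma monomial_add: "monomial n f \<Longrightarrow> monomial n g \<Longrightarrow> monomial n (f + g)"
  by (auto simp: monomial_def)

lemma strongly_stable_monomial: "strongly_stable n J \<Longrightarrow> u \<in> J \<Longrightarrow> monomial n u"
  by (auto simp: strongly_stable_def monomial_ideal_def)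

lemma monomial_split_two_variables:
  assumes "monomial n u" and "i \<noteq> j"
  obtains f p q where "monomial n f" "f i = 0" "f j = 0" "u = f + xpow i p + xpow j q"
proof
  show "monomial n (u(i := 0, j := 0))" using assms(1) by (auto simp: monomial_def)
  show "u = u(i := 0, j := 0) + xpow i (u i) + xpow j (u j)"
    using assms(2) by (auto simp: fun_eq_iff xpow_def)
qed simp_all

lemma strongly_stable_move_exponent:
  assumes ss: "strongly_stable n J" and ij: "i < j" "j < n" and f: "monomial n f"
    and "f + xpow i p + xpow j (q + k) \<in> J"
  shows "f + xpow i (p + k) + xpow j q \<in> J"
  using assms(5)
proof (induction k arbitrary: p)
  case 0
  then show ?case by simp
next
  case (Suc k)
  let ?m = "f + xpow i p + xpow j (q + k)"
  have "monomial n ?m" using ij f by (intro monomial_add monomial_xpow) auto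
  moreover have "?m + xpow j 1 \<in> J"
  proof -
    have "?m + xpow j 1 = f + xpow i p + xpow j (q + Suc k)"
      by (auto simp: fun_eq_iff xpow_def)
    then show ?thesis using Suc.prems by (simp only:)
  qed
  ultimately have "?m + xpow i 1 \<in> J"
    using ss ij unfolding strongly_stable_def by blast
  moreover have "?m + xpow i 1 = f + xpow i (Suc p) + xpow j (q + k)"
    using ij by (auto simp: fun_eq_iff xpow_def)
  ultimately have "f + xpow i (Suc p) + xpow j (q + k) \<in> J" by simp
  from Suc.IH[OF this] show ?case by simp
qed

lemma shift_low_b_degree:
  "\<lbrakk>monomial n f; f i = 0; f j = 0; f + xpow i s + xpow j r \<in> I; r < t\<rbrakk>
   \<Longrightarrow> f + xpow i s + xpow j r \<in> shift n I i j t"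
  unfolding shift_def by (intro UnI1 CollectI exI conjI) (rule refl | assumption)+

lemma shift_diagonal:
  "\<lbrakk>monomial n f; f i = 0; f j = 0; f + xpow i s + xpow j (s + t) \<in> I\<rbrakk>
   \<Longrightarrow> f + xpow i s + xpow j (s + t) \<in> shift n I i j t"
  unfolding shift_def by (rule UnI1, rule UnI1, rule UnI2) (intro CollectI exI conjI; (rule refl | assumption))

lemma shift_above_diagonal:
  "\<lbrakk>monomial n f; f i = 0; f j = 0; s < l; f + xpow i l + xpow j (s + t) \<in> I\<rbrakk>
   \<Longrightarrow> f + xpow i l + xpow j (s + t) \<in> shift n I i j t"
  unfolding shift_def by (rule UnI1, rule UnI2) (intro CollectI exI conjI disjI1; (rule refl | assumption))

lemma shift_below_diagonal:
  "\<lbrakk>monomial n f; f i = 0; f j = 0; s < l;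
    f + xpow i l + xpow j (s + t) \<in> I; f + xpow i s + xpow j (l + t) \<in> I\<rbrakk>
   \<Longrightarrow> f + xpow i s + xpow j (l + t) \<in> shift n I i j t"
  unfolding shift_def by (rule UnI2) (intro CollectI exI conjI; (rule refl | assumption))

lemma strongly_stable_below_diagonal_in_shift:
  assumes ss: "strongly_stable n J" and "J \<subseteq> I" and ij: "i < j" "j < n"
    and f: "monomial n f" "f i = 0" "f j = 0" and "p < l"
    and u: "f + xpow i p + xpow j (l + t) \<in> J"
  shows "f + xpow i p + xpow j (l + t) \<in> shift n I i j t"
proof -
  have b_exp: "p + t + (l - p) = l + t" and a_exp: "p + (l - p) = l"
    using \<open>p < l\<close> by simp_all
  have "f + xpow i p + xpow j (p + t + (l - p)) \<in> J"
    using u unfolding b_exp .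
  then have "f + xpow i (p + (l - p)) + xpow j (p + t) \<in> J"
    by (rule strongly_stable_move_exponent[OF ss ij f(1)])
  then have "f + xpow i l + xpow j (p + t) \<in> J"
    unfolding a_exp .
  with \<open>J \<subseteq> I\<close> u show ?thesis
    using shift_below_diagonal[OF f \<open>p < l\<close>] by blast
qed

lemma strongly_stable_subset_shift:
  assumes ss: "strongly_stable n J" and "J \<subseteq> I" and ij: "i < j" "j < n"
  shows "J \<subseteq> shift n I i j t"
proof
  fix u assume "u \<in> J"
  obtain f p q where f: "monomial n f" "f i = 0" "f j = 0"
    and u: "u = f + xpow i p + xpow j q"
    using monomial_split_two_variables[OF strongly_stable_monomial[OF ss \<open>u \<in> J\<close>]] ij(1)
    by (metis less_irrefl)
  from \<open>u \<in> J\<close> have uJ: "f + xpow i p + xpow j q \<in> J" unfolding u .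
  then have uI: "f + xpow i p + xpow j q \<in> I" using \<open>J \<subseteq> I\<close> by blast
  consider "q < t" | "q = p + t" | s where "q = s + t" "s < p" | l where "q = l + t" "p < l"
    by (metis add.commute less_add_eq_less linorder_neqE_nat nat_le_iff_add not_le)
  then have "f + xpow i p + xpow j q \<in> shift n I i j t"
  proof cases
    case 1
    then show ?thesis by (rule shift_low_b_degree[OF f uI])
  next
    case 2
    then show ?thesis using shift_diagonal[OF f] uI by simp
  next
    case (3 s)
    then show ?thesis using shift_above_diagonal[OF f \<open>s < p\<close>] uI by simp
  next
    case (4 l)
    then show ?thesis
      using strongly_stable_below_diagonal_in_shift[OF ss \<open>J \<subseteq> I\<close> ij f \<open>p < l\<close>] uJ by simp
  qed
  then show "u \<in> shift n I i j t" unfolding u .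
qed

theorem mainTheorem3:
  fixes n r :: nat and e :: "nat \<Rightarrow> nat" and I J :: "(nat \<Rightarrow> nat) set"
    and i j t :: nat
  assumes "r \<le> n"
    and "\<forall>k<r. 2 \<le> e k"
    and "\<forall>k l. k \<le> l \<longrightarrow> l < r \<longrightarrow> e k \<le> e l"
    and "strongly_stable n J"
    and "monomial_ideal n I"
    and "pure_powers_ideal n r e \<subseteq> I"
    and "J \<subseteq> I"
    and "i < j" and "j < n"
    and "0 < t"
  shows "J \<subseteq> shift n I i j t"
  using assms(4,7,8,9) by (rule strongly_stable_subset_shift)

end
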